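(* Let $G$ be a Feynman diagram and $A_G$ the support of $\mathcal{F}_{z,m}$ for generic $(z,m)\in\mathbb{R}^K\times\mathbb{R}^{\mathcal{E}}$. Then $\mathcal{K}_G\cap\operatorname{int}\mathcal{C}_{A_G}\neq\emptyset$ if and only if $\mathcal{K}_G$ contains a polynomial in which every monomial $x^a$, $a\in A_G$, has strictly positive coefficient.
   Context: $G$ is a connected graph with internal edges $1,\dots,n$ (variables $x_1,\dots,x_n$); $\mathcal{T}$ = spanning trees (as subsets of $[n]$), $\mathcal{W}$ = spanning 2-forests $\{T_1,T_2\}$; $\mathcal{U}(x)=\sum_{T\in\mathcal{T}}\prod_{e\notin T}x_e$. For a linear map $L:\mathbb{R}^K\to\mathbb{R}^{\mathcal{W}}$ and $\mathcal{E}\subseteq[n]$, $\mathcal{F}_{z,m}(x)=\sum_{\{T_1,T_2\}\in\mathcal{W}}L_{T_1,T_2}(z)\prod_{e\notin T_1\sqcup T_2}x_e+\big(\sum_{e\in\mathcal{E}}m_ex_e\big)\mathcal{U}(x)$. The kinematic space is $\mathcal{K}_G=\{\mathcal{F}_{z,m}:(z,m)\in\mathbb{R}^K\times\mathbb{R}^{\mathcal{E}}\}\subseteq\mathbb{R}[x]_{A_G}$, where $\mathbb{R}[x]_{A_G}$ is the space of polynomials with support in $A_G$. $\mathcal{C}_{A_G}=\{g\in\mathbb{R}[x]_{A_G}:g\ge0\text{ on }\mathbb{R}^n_{>0}\}$ and $\operatorname{int}$ is the interior in $\mathbb{R}[x]_{A_G}$. *)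

theory Defs
  imports "HOL-Analysis.Analysis" "HOL-Library.Poly_Mapping"
begin

text \<open>Graphs: vertex set V, internal edges 0..<n (edge e corresponds to x_(e+1)),
  edge e has endpoints ends e (multi-edges and self-loops allowed).\<close>

definition conn :: "(nat \<Rightarrow> 'v \<times> 'v) \<Rightarrow> nat set \<Rightarrow> 'v \<Rightarrow> 'v \<Rightarrow> bool" where
  "conn ends S = (\<lambda>a b. \<exists>e\<in>S. ends e = (a, b) \<or> ends e = (b, a))\<^sup>*\<^sup>*"

definition is_forest :: "(nat \<Rightarrow> 'v \<times> 'v) \<Rightarrow> nat \<Rightarrow> nat set \<Rightarrow> bool" where
  "is_forest ends n F \<longleftrightarrow> F \<subseteq> {0..<n} \<and>
     (\<forall>e\<in>F. \<not> conn ends (F - {e}) (fst (ends e)) (snd (ends e)))"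

definition conn_rel :: "'v set \<Rightarrow> (nat \<Rightarrow> 'v \<times> 'v) \<Rightarrow> nat set \<Rightarrow> ('v \<times> 'v) set" where
  "conn_rel V ends S = {(u, v). u \<in> V \<and> v \<in> V \<and> conn ends S u v}"

definition connected_graph :: "'v set \<Rightarrow> (nat \<Rightarrow> 'v \<times> 'v) \<Rightarrow> nat \<Rightarrow> bool" where
  "connected_graph V ends n \<longleftrightarrow> finite V \<and> V \<noteq> {} \<and>
     (\<forall>e<n. fst (ends e) \<in> V \<and> snd (ends e) \<in> V) \<and>
     (\<forall>u\<in>V. \<forall>v\<in>V. conn ends {0..<n} u v)"

definition spanning_trees :: "'v set \<Rightarrow> (nat \<Rightarrow> 'v \<times> 'v) \<Rightarrow> nat \<Rightarrow> nat set set" where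
  "spanning_trees V ends n = {T. is_forest ends n T \<and> (\<forall>u\<in>V. \<forall>v\<in>V. conn ends T u v)}"

text \<open>Spanning 2-forests {T1,T2}, represented by their edge set T1 \<union> T2
  (which determines the unordered pair of trees as its two components).\<close>
definition spanning_2forests :: "'v set \<Rightarrow> (nat \<Rightarrow> 'v \<times> 'v) \<Rightarrow> nat \<Rightarrow> nat set set" where
  "spanning_2forests V ends n = {F. is_forest ends n F \<and> card (V // conn_rel V ends F) = 2}"

type_synonym rpoly = "(nat \<Rightarrow>\<^sub>0 nat) \<Rightarrow>\<^sub>0 real"

definition peval :: "rpoly \<Rightarrow> (nat \<Rightarrow> real) \<Rightarrow> real" where
  "peval p x = (\<Sum>a\<in>Poly_Mapping.keys p. Poly_Mapping.lookup p a * (\<Prod>i\<in>Poly_Mapping.keys a. x i ^ Poly_Mapping.lookup a i))"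

definition expo :: "nat \<Rightarrow> nat set \<Rightarrow> (nat \<Rightarrow>\<^sub>0 nat)" where
  "expo n S = (\<Sum>e\<in>{0..<n} - S. Poly_Mapping.single e 1)"

definition symanzik_U :: "'v set \<Rightarrow> (nat \<Rightarrow> 'v \<times> 'v) \<Rightarrow> nat \<Rightarrow> rpoly" where
  "symanzik_U V ends n = (\<Sum>T\<in>spanning_trees V ends n. Poly_Mapping.single (expo n T) 1)"

definition symanzik_F ::
  "'v set \<Rightarrow> (nat \<Rightarrow> 'v \<times> 'v) \<Rightarrow> nat \<Rightarrow> (nat set \<Rightarrow> real^'k \<Rightarrow> real) \<Rightarrow> nat set
   \<Rightarrow> real^'k \<Rightarrow> (nat \<Rightarrow> real) \<Rightarrow> rpoly" where
  "symanzik_F V ends n L E z m =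
     (\<Sum>F\<in>spanning_2forests V ends n. Poly_Mapping.single (expo n F) (L F z))
     + (\<Sum>e\<in>E. Poly_Mapping.single (Poly_Mapping.single e 1) (m e)) * symanzik_U V ends n"

definition kinematic_space ::
  "'v set \<Rightarrow> (nat \<Rightarrow> 'v \<times> 'v) \<Rightarrow> nat \<Rightarrow> (nat set \<Rightarrow> real^'k \<Rightarrow> real) \<Rightarrow> nat set \<Rightarrow> rpoly set" where
  "kinematic_space V ends n L E =
     {symanzik_F V ends n L E z m | (z :: real^'k) m. True}"

text \<open>Generic support A_G: the union of the supports of all F_{z,m}
  (coefficients depend linearly on (z,m), so this is the support for generic parameters).\<close>
definition generic_support ::
  "'v set \<Rightarrow> (nat \<Rightarrow> 'v \<times> 'v) \<Rightarrow> nat \<Rightarrow> (nat set \<Rightarrow> real^'k \<Rightarrow> real) \<Rightarrow> nat set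
   \<Rightarrow> (nat \<Rightarrow>\<^sub>0 nat) set" where
  "generic_support V ends n L E = \<Union> (Poly_Mapping.keys ` kinematic_space V ends n L E)"

definition poly_space :: "(nat \<Rightarrow>\<^sub>0 nat) set \<Rightarrow> rpoly set" where
  "poly_space A = {g. Poly_Mapping.keys g \<subseteq> A}"

definition nonneg_cone :: "nat \<Rightarrow> (nat \<Rightarrow>\<^sub>0 nat) set \<Rightarrow> rpoly set" where
  "nonneg_cone n A = {g \<in> poly_space A. \<forall>x. (\<forall>i<n. x i > 0) \<longrightarrow> peval g x \<ge> 0}"

definition interior_in :: "(nat \<Rightarrow>\<^sub>0 nat) set \<Rightarrow> rpoly set \<Rightarrow> rpoly set" where
  "interior_in A C = {g \<in> C. \<exists>\<epsilon>>0. \<forall>h\<in>poly_space A.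
      (\<forall>a\<in>A. \<bar>Poly_Mapping.lookup h a - Poly_Mapping.lookup g a\<bar> < \<epsilon>) \<longrightarrow> h \<in> C}"

end

theory Submission
  imports Defs
begin

(*
  A polynomial whose coefficients are positive on the finite set A stays coefficientwise
  nonnegative under small perturbations, hence lies in the interior of the nonnegativity cone.

  Conversely, if F_{z,m} is interior then so is F_{z,m} - eps x^a, so its coefficient at any
  point a of A exposed by a linear weight w is positive: along x_i = t^(w_i) the monomial x^a
  dominates. Raising every mass m_e by the same constant c adds c N_b to the coefficient of x^b,
  where N_b counts the pairs (e, T) with x_e x^(complement of T) = x^b. For large c this makes
  every coefficient with N_b > 0 positive. A monomial of A with N_b = 0 is x^(complement of F)
  for a spanning 2-forest F that no edge of E completes to a spanning tree, and such a monomial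
  is exposed by the weight 1_J - 1_F, where J is the set of edges completing F to a spanning
  tree. Only the masses are changed.
*)

lemma conn_refl [simp]: "conn ends S a a"
  by (simp add: conn_def)

lemma conn_trans: "conn ends S a b \<Longrightarrow> conn ends S b c \<Longrightarrow> conn ends S a c"
  unfolding conn_def by (rule rtranclp_trans)

lemma conn_sym: "conn ends S a b \<Longrightarrow> conn ends S b a"
  unfolding conn_def by (rule sympD[OF symp_rtranclp]) (auto intro: sympI)

lemma conn_mono: "S \<subseteq> S' \<Longrightarrow> conn ends S a b \<Longrightarrow> conn ends S' a b"
  unfolding conn_def by (erule rtranclp_mono[THEN predicate2D, rotated]) auto

lemma conn_edge: "e \<in> S \<Longrightarrow> conn ends S (fst (ends e)) (snd (ends e))"
  unfolding conn_def by (rule r_into_rtranclp) (metis prod.collapse)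

lemma conn_insert:
  "conn ends (insert e S) x y \<longleftrightarrow> conn ends S x y \<or>
     (conn ends S x (fst (ends e)) \<and> conn ends S (snd (ends e)) y) \<or>
     (conn ends S x (snd (ends e)) \<and> conn ends S (fst (ends e)) y)"
  (is "?L \<longleftrightarrow> ?R")
proof
  assume ?L
  then show ?R unfolding conn_def[of ends "insert e S"]
  proof (induction rule: rtranclp_induct)
    case (step y z)
    then obtain e' where e': "e' \<in> insert e S" "ends e' = (y, z) \<or> ends e' = (z, y)"
      by blast
    show ?case
    proof (cases "e' \<in> S")
      case True
      then have "conn ends S y z"
        using e'(2) conn_edge[OF True, of ends] conn_sym by (metis fst_conv snd_conv)
      then show ?thesis using step.IH conn_trans by metis
    next
      case False
      with e' have "ends e = (y, z) \<or> ends e = (z, y)" by auto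
      with step.IH show ?thesis by (metis conn_refl conn_sym conn_trans fst_conv snd_conv)
    qed
  qed simp
next
  have "conn ends (insert e S) (fst (ends e)) (snd (ends e))" by (rule conn_edge) simp
  moreover have "\<And>a b. conn ends S a b \<Longrightarrow> conn ends (insert e S) a b" by (rule conn_mono) auto
  ultimately show "?R \<Longrightarrow> ?L" by (metis conn_sym conn_trans)
qed

lemma equiv_conn_rel: "equiv V (conn_rel V ends S)"
  unfolding equiv_def refl_on_def sym_def trans_def conn_rel_def
  by (auto intro: conn_sym conn_trans)

lemma conn_rel_Image: "x \<in> V \<Longrightarrow> conn_rel V ends S `` {x} = {y \<in> V. conn ends S x y}"
  unfolding conn_rel_def by auto

lemma card_quotient_merge:
  assumes R: "equiv V R" and V: "finite V" and u: "u \<in> V" and w: "w \<in> V"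
    and uw: "(u, w) \<notin> R"
    and R': "\<And>x. x \<in> V \<Longrightarrow>
      R' `` {x} = (if x \<in> R `` {u} \<union> R `` {w} then R `` {u} \<union> R `` {w} else R `` {x})"
  shows "card (V // R) = card (V // R') + 1"
proof -
  define Cu where "Cu = R `` {u}"
  define Cw where "Cw = R `` {w}"
  have Cu: "Cu \<in> V // R" and Cw: "Cw \<in> V // R"
    unfolding Cu_def Cw_def using u w by (auto intro: quotientI)
  have "Cu \<noteq> Cw" unfolding Cu_def Cw_def using eq_equiv_class_iff[OF R u w] uw by blast
  have class_eq: "R `` {x} = Cu" if "x \<in> Cu" for x
    using equiv_class_eq[OF R, of u x] that unfolding Cu_def by simp
  have class_eq': "R `` {x} = Cw" if "x \<in> Cw" for x
    using equiv_class_eq[OF R, of w x] that unfolding Cw_def by simp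
  have "u \<in> Cu" unfolding Cu_def using R u by (rule equiv_class_self)
  have "w \<in> Cw" unfolding Cw_def using R w by (rule equiv_class_self)
  have merged: "Cu \<union> Cw \<notin> V // R"
    using in_quotient_imp_in_rel[OF R, of "Cu \<union> Cw" u w] \<open>u \<in> Cu\<close> \<open>w \<in> Cw\<close> uw by blast
  have "V // R' = insert (Cu \<union> Cw) (V // R - {Cu, Cw})"
  proof (intro equalityI subsetI)
    fix X assume "X \<in> V // R'"
    then obtain x where x: "x \<in> V" "X = R' `` {x}" by (auto elim: quotientE)
    show "X \<in> insert (Cu \<union> Cw) (V // R - {Cu, Cw})"
    proof (cases "x \<in> Cu \<union> Cw")
      case False
      then have "R `` {x} \<noteq> Cu" "R `` {x} \<noteq> Cw" using equiv_class_self[OF R x(1)] by auto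
      then show ?thesis using R'[OF x(1)] x False quotientI[OF x(1)] unfolding Cu_def Cw_def by auto
    qed (use R'[OF x(1)] x in \<open>auto simp: Cu_def Cw_def\<close>)
  next
    fix X assume X: "X \<in> insert (Cu \<union> Cw) (V // R - {Cu, Cw})"
    show "X \<in> V // R'"
    proof (cases "X = Cu \<union> Cw")
      case True
      then show ?thesis using R'[OF u] \<open>u \<in> Cu\<close> quotientI[OF u, of R'] by (simp add: Cu_def Cw_def)
    next
      case False
      with X obtain x where x: "x \<in> V" "X = R `` {x}" "X \<noteq> Cu" "X \<noteq> Cw"
        by (auto elim: quotientE)
      then have "x \<notin> Cu \<union> Cw" using class_eq class_eq' by auto
      then show ?thesis using R'[OF x(1)] x quotientI[OF x(1), of R'] by (simp add: Cu_def Cw_def)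
    qed
  qed
  moreover have "finite (V // R)" using V R by (simp add: finite_quotient equiv_type)
  moreover have "2 \<le> card (V // R)"
    using card_mono[of "V // R" "{Cu, Cw}"] \<open>finite (V // R)\<close> Cu Cw \<open>Cu \<noteq> Cw\<close> by auto
  ultimately show ?thesis
    using merged Cu Cw \<open>Cu \<noteq> Cw\<close> by (simp add: card_Diff_subset)
qed

abbreviation num_components :: "'v set \<Rightarrow> (nat \<Rightarrow> 'v \<times> 'v) \<Rightarrow> nat set \<Rightarrow> nat" where
  "num_components V ends S \<equiv> card (V // conn_rel V ends S)"

lemma num_components_insert:
  assumes V: "finite V" and ends: "fst (ends e) \<in> V" "snd (ends e) \<in> V"
    and not_conn: "\<not> conn ends S (fst (ends e)) (snd (ends e))"
  shows "num_components V ends S = num_components V ends (insert e S) + 1"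
proof (rule card_quotient_merge[OF equiv_conn_rel V ends])
  show "(fst (ends e), snd (ends e)) \<notin> conn_rel V ends S"
    using not_conn unfolding conn_rel_def by blast
next
  fix x assume "x \<in> V"
  then show "conn_rel V ends (insert e S) `` {x} =
    (if x \<in> conn_rel V ends S `` {fst (ends e)} \<union> conn_rel V ends S `` {snd (ends e)}
     then conn_rel V ends S `` {fst (ends e)} \<union> conn_rel V ends S `` {snd (ends e)}
     else conn_rel V ends S `` {x})"
    using ends not_conn unfolding conn_rel_Image[OF \<open>x \<in> V\<close>] conn_rel_Image[OF ends(1)]
      conn_rel_Image[OF ends(2)] conn_insert
    by (auto 4 3 intro: conn_sym conn_trans)
qed

lemma is_forest_subset: "is_forest ends n S' \<Longrightarrow> S \<subseteq> S' \<Longrightarrow> is_forest ends n S"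
  unfolding is_forest_def by (meson Diff_mono conn_mono order_refl subset_iff)

lemma num_components_forest_subset:
  assumes G: "connected_graph V ends n" and forest: "is_forest ends n S'" and "S \<subseteq> S'"
  shows "num_components V ends S = num_components V ends S' + card (S' - S)"
proof -
  have "num_components V ends S = num_components V ends (S \<union> D) + card D"
    if "finite D" "D \<inter> S = {}" "is_forest ends n (S \<union> D)" for D
    using that
  proof (induction D rule: finite_induct)
    case (insert e D)
    then have "e < n" "e \<notin> S \<union> D" unfolding is_forest_def by auto
    moreover have "\<not> conn ends (insert e (S \<union> D) - {e}) (fst (ends e)) (snd (ends e))"
      using insert.prems(2) unfolding is_forest_def by simp
    ultimately have "num_components V ends (S \<union> D) = num_components V ends (S \<union> insert e D) + 1"
      using G num_components_insert[of V ends e "S \<union> D"] unfolding connected_graph_def by simp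
    moreover have "num_components V ends S = num_components V ends (S \<union> D) + card D"
      using insert is_forest_subset[OF insert.prems(2)] by blast
    ultimately show ?case using insert by simp
  qed simp
  moreover have "finite (S' - S)"
    using forest unfolding is_forest_def by (meson finite_Diff finite_atLeastLessThan finite_subset)
  moreover have "S \<union> (S' - S) = S'" using \<open>S \<subseteq> S'\<close> by blast
  ultimately show ?thesis using forest by (metis Diff_disjoint Int_commute)
qed

lemma num_components_spanning_tree:
  assumes "connected_graph V ends n" "T \<in> spanning_trees V ends n"
  shows "num_components V ends T = 1"
proof -
  have "V // conn_rel V ends T = {V}"
    using assms unfolding quotient_def connected_graph_def spanning_trees_def
    by (auto simp: conn_rel_Image)
  then show ?thesis by simp
qed

lemma spanning_2forest_subset_eq:
  assumes G: "connected_graph V ends n"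
    and F: "F \<in> spanning_2forests V ends n" and F': "F' \<in> spanning_2forests V ends n"
    and "F \<subseteq> F'"
  shows "F = F'"
proof -
  have "is_forest ends n F'" using F' unfolding spanning_2forests_def by simp
  then have "card (F' - F) = 0" "finite F'"
    using num_components_forest_subset[OF G _ \<open>F \<subseteq> F'\<close>] F F'
    unfolding spanning_2forests_def is_forest_def by (auto intro: finite_subset)
  then show ?thesis using \<open>F \<subseteq> F'\<close> by auto
qed

lemma spanning_tree_eq_insert:
  assumes G: "connected_graph V ends n"
    and F: "F \<in> spanning_2forests V ends n" and T: "T \<in> spanning_trees V ends n"
    and "F \<subseteq> T"
  obtains j where "j \<notin> F" "T = insert j F"
proof -
  have "is_forest ends n T" using T unfolding spanning_trees_def by simp
  then have "card (T - F) = 1"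
    using num_components_forest_subset[OF G _ \<open>F \<subseteq> T\<close>] num_components_spanning_tree[OF G T] F
    unfolding spanning_2forests_def by simp
  then obtain j where "T - F = {j}" by (meson card_1_singletonE)
  then show ?thesis using that \<open>F \<subseteq> T\<close> by blast
qed

lemma spanning_trees_subset: "T \<in> spanning_trees V ends n \<Longrightarrow> T \<subseteq> {0..<n}"
  unfolding spanning_trees_def is_forest_def by auto

lemma spanning_2forests_subset: "F \<in> spanning_2forests V ends n \<Longrightarrow> F \<subseteq> {0..<n}"
  unfolding spanning_2forests_def is_forest_def by auto

lemma finite_spanning_trees: "finite (spanning_trees V ends n)"
  by (rule finite_subset[of _ "Pow {0..<n}"]) (auto dest: spanning_trees_subset)

lemma finite_spanning_2forests: "finite (spanning_2forests V ends n)"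
  by (rule finite_subset[of _ "Pow {0..<n}"]) (auto dest: spanning_2forests_subset)

lemma lookup_expo: "Poly_Mapping.lookup (expo n S) i = (if i < n \<and> i \<notin> S then 1 else 0)"
  unfolding expo_def by (simp add: lookup_sum lookup_single when_def)

lemma keys_expo: "Poly_Mapping.keys (expo n S) \<subseteq> {0..<n}"
  by (auto simp: in_keys_iff lookup_expo split: if_splits)

lemma single_add_expo_insert:
  "e < n \<Longrightarrow> e \<notin> F \<Longrightarrow> Poly_Mapping.single e 1 + expo n (insert e F) = expo n F"
  by (rule poly_mapping_eqI) (auto simp: lookup_add lookup_expo lookup_single when_def)

lemma lookup_sum_single:
  "finite S \<Longrightarrow> Poly_Mapping.lookup (\<Sum>x\<in>S. Poly_Mapping.single (f x) (c x)) b =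
     (\<Sum>x\<in>{x \<in> S. f x = b}. c x)"
  by (simp add: lookup_sum lookup_single when_def sum.inter_filter)

(* the terms x_e x^(complement of T) of (sum_e m_e x_e) U that contribute to the monomial x^b *)
definition mass_index ::
  "'v set \<Rightarrow> (nat \<Rightarrow> 'v \<times> 'v) \<Rightarrow> nat \<Rightarrow> nat set \<Rightarrow> (nat \<Rightarrow>\<^sub>0 nat) \<Rightarrow> (nat \<times> nat set) set" where
  "mass_index V ends n E b =
     {p \<in> E \<times> spanning_trees V ends n. Poly_Mapping.single (fst p) 1 + expo n (snd p) = b}"

lemma finite_mass_index: "finite E \<Longrightarrow> finite (mass_index V ends n E b)"
  unfolding mass_index_def by (auto intro: finite_subset[of _ "E \<times> spanning_trees V ends n"]
    simp: finite_spanning_trees)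

lemma symanzik_F_eq_sum:
  "symanzik_F V ends n L E z m =
     (\<Sum>F\<in>spanning_2forests V ends n. Poly_Mapping.single (expo n F) (L F z)) +
     (\<Sum>p\<in>E \<times> spanning_trees V ends n.
        Poly_Mapping.single (Poly_Mapping.single (fst p) 1 + expo n (snd p)) (m (fst p)))"
  unfolding symanzik_F_def symanzik_U_def sum_product mult_single sum.cartesian_product
  by (simp add: case_prod_beta')

lemma lookup_symanzik_F:
  assumes "finite E"
  shows "Poly_Mapping.lookup (symanzik_F V ends n L E z m) b =
    (\<Sum>F\<in>{F \<in> spanning_2forests V ends n. expo n F = b}. L F z) +
    (\<Sum>p\<in>mass_index V ends n E b. m (fst p))"
  unfolding symanzik_F_eq_sum lookup_add mass_index_def using assms
  by (simp only: lookup_sum_single finite_spanning_2forests finite_spanning_trees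
      finite_cartesian_product)

lemma lookup_symanzik_F_shift:
  assumes "finite E"
  shows "Poly_Mapping.lookup (symanzik_F V ends n L E z (\<lambda>e. m e + c)) b =
    Poly_Mapping.lookup (symanzik_F V ends n L E z m) b + c * real (card (mass_index V ends n E b))"
  unfolding lookup_symanzik_F[OF assms] by (simp add: sum.distrib)

lemma generic_support_subset:
  assumes "finite E"
  shows "generic_support V ends n L E \<subseteq> expo n ` spanning_2forests V ends n \<union>
    (\<lambda>p. Poly_Mapping.single (fst p) 1 + expo n (snd p)) ` (E \<times> spanning_trees V ends n)"
proof
  fix b assume "b \<in> generic_support V ends n L E"
  then obtain z m where "Poly_Mapping.lookup (symanzik_F V ends n L E z m) b \<noteq> 0"
    unfolding generic_support_def kinematic_space_def by (auto simp: in_keys_iff)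
  then have "{F \<in> spanning_2forests V ends n. expo n F = b} \<noteq> {} \<or> mass_index V ends n E b \<noteq> {}"
    unfolding lookup_symanzik_F[OF assms] by force
  then show "b \<in> expo n ` spanning_2forests V ends n \<union>
    (\<lambda>p. Poly_Mapping.single (fst p) 1 + expo n (snd p)) ` (E \<times> spanning_trees V ends n)"
    unfolding mass_index_def by blast
qed

lemma finite_generic_support: "finite E \<Longrightarrow> finite (generic_support V ends n L E)"
  by (rule finite_subset[OF generic_support_subset])
    (simp_all add: finite_spanning_2forests finite_spanning_trees)

lemma keys_generic_support:
  assumes "E \<subseteq> {0..<n}" "b \<in> generic_support V ends n L E"
  shows "Poly_Mapping.keys b \<subseteq> {0..<n}"
proof -
  have "Poly_Mapping.keys (Poly_Mapping.single e 1 + expo n T) \<subseteq> {0..<n}" if "e \<in> E" for e T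
    using keys_add[of "Poly_Mapping.single e (1::nat)" "expo n T"] keys_expo[of n T] that assms(1)
    by auto
  moreover consider F where "b = expo n F"
    | e T where "e \<in> E" "b = Poly_Mapping.single e 1 + expo n T"
    using generic_support_subset[OF finite_subset[OF assms(1)]] assms(2) by fastforce
  ultimately show ?thesis by (metis keys_expo)
qed

definition weight :: "(nat \<Rightarrow> real) \<Rightarrow> (nat \<Rightarrow>\<^sub>0 nat) \<Rightarrow> real" where
  "weight w a = (\<Sum>i\<in>Poly_Mapping.keys a. w i * real (Poly_Mapping.lookup a i))"

lemma monomial_powr_weight:
  assumes "0 < t"
  shows "(\<Prod>i\<in>Poly_Mapping.keys a. (t powr w i) ^ Poly_Mapping.lookup a i) = t powr weight w a"
  unfolding weight_def using assms by (simp add: powr_sum powr_power mult.commute)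

lemma peval_eq_sum_superset:
  assumes "finite B" "Poly_Mapping.keys p \<subseteq> B"
  shows "peval p x =
    (\<Sum>a\<in>B. Poly_Mapping.lookup p a * (\<Prod>i\<in>Poly_Mapping.keys a. x i ^ Poly_Mapping.lookup a i))"
  unfolding peval_def by (rule sum.mono_neutral_left) (use assms in \<open>auto simp: in_keys_iff\<close>)

lemma nonneg_coeff_at_exposed_monomial:
  assumes A: "finite A" "Poly_Mapping.keys g \<subseteq> A" "a \<in> A"
    and nonneg: "\<And>x. (\<forall>i. 0 < x i) \<Longrightarrow> 0 \<le> peval g x"
    and exposed: "\<And>b. b \<in> A - {a} \<Longrightarrow> weight w b + 1 \<le> weight w a"
  shows "0 \<le> Poly_Mapping.lookup g a"
proof (rule ccontr)
  assume "\<not> ?thesis"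
  then have ga: "Poly_Mapping.lookup g a < 0" by simp
  define S where "S = (\<Sum>b\<in>A - {a}. \<bar>Poly_Mapping.lookup g b\<bar>)"
  (* chosen so that g_a * t + S = 2 g_a < 0 *)
  define t where "t = S / - Poly_Mapping.lookup g a + 2"
  have "0 \<le> S" unfolding S_def by (simp add: sum_nonneg)
  then have "1 \<le> t" unfolding t_def using ga by (simp add: divide_nonneg_pos)
  then have "0 < t" by simp
  define W where "W = weight w a - 1"
  define x where "x i = t powr w i" for i
  have "peval g x = Poly_Mapping.lookup g a * t powr weight w a +
      (\<Sum>b\<in>A - {a}. Poly_Mapping.lookup g b * t powr weight w b)"
    unfolding peval_eq_sum_superset[OF A(1,2)] x_def monomial_powr_weight[OF \<open>0 < t\<close>]
    using A by (simp add: sum.remove)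
  also have "(\<Sum>b\<in>A - {a}. Poly_Mapping.lookup g b * t powr weight w b) \<le> S * t powr W"
    unfolding S_def sum_distrib_right
  proof (rule sum_mono)
    fix b assume "b \<in> A - {a}"
    then have "weight w b \<le> W" using exposed unfolding W_def by fastforce
    then have "t powr weight w b \<le> t powr W" using \<open>1 \<le> t\<close> by (rule powr_mono)
    then show "Poly_Mapping.lookup g b * t powr weight w b \<le> \<bar>Poly_Mapping.lookup g b\<bar> * t powr W"
      by (meson abs_ge_self abs_ge_zero mult_mono order_trans powr_ge_zero)
  qed
  also have "t powr weight w a = t * t powr W"
    unfolding W_def using \<open>1 \<le> t\<close> by (simp add: powr_diff)
  finally have "peval g x \<le> t powr W * (Poly_Mapping.lookup g a * t + S)"
    by (simp add: algebra_simps)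
  also have "\<dots> < 0"
    using ga \<open>1 \<le> t\<close> unfolding t_def by (intro mult_pos_neg) (auto simp: field_simps)
  finally show False
    using nonneg[of x] \<open>1 \<le> t\<close> unfolding x_def by simp
qed

lemma lookup_pos_of_interior_exposed:
  assumes f: "f \<in> interior_in A (nonneg_cone n A)" and A: "finite A" "a \<in> A"
    and exposed: "\<And>b. b \<in> A - {a} \<Longrightarrow> weight w b + 1 \<le> weight w a"
  shows "0 < Poly_Mapping.lookup f a"
proof -
  obtain \<epsilon> where "0 < \<epsilon>" and f: "f \<in> nonneg_cone n A"
    and ball: "\<And>h. h \<in> poly_space A \<Longrightarrow>
      \<forall>b\<in>A. \<bar>Poly_Mapping.lookup h b - Poly_Mapping.lookup f b\<bar> < \<epsilon> \<Longrightarrow> h \<in> nonneg_cone n A"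
    using f unfolding interior_in_def by blast
  define h where "h = f - Poly_Mapping.single a (\<epsilon> / 2)"
  have lookup_h: "Poly_Mapping.lookup h b = Poly_Mapping.lookup f b - (if a = b then \<epsilon> / 2 else 0)" for b
    unfolding h_def by (simp add: lookup_minus lookup_single when_def)
  have "Poly_Mapping.keys f \<subseteq> A" using f unfolding nonneg_cone_def poly_space_def by simp
  then have "Poly_Mapping.keys h \<subseteq> A"
    using A(2) by (auto simp: in_keys_iff lookup_h split: if_splits)
  then have "h \<in> nonneg_cone n A"
    using ball \<open>0 < \<epsilon>\<close> by (simp add: poly_space_def lookup_h)
  then have "0 \<le> Poly_Mapping.lookup h a"
    using nonneg_coeff_at_exposed_monomial[OF A(1) _ A(2) _ exposed]
    unfolding nonneg_cone_def poly_space_def by blast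
  then show ?thesis using \<open>0 < \<epsilon>\<close> by (simp add: lookup_h)
qed

lemma nonneg_cone_of_nonneg_coeffs:
  assumes keys: "Poly_Mapping.keys h \<subseteq> A" and A: "\<forall>b\<in>A. Poly_Mapping.keys b \<subseteq> {0..<n}"
    and nonneg: "\<forall>b\<in>A. 0 \<le> Poly_Mapping.lookup h b"
  shows "h \<in> nonneg_cone n A"
proof -
  have "0 \<le> peval h x" if x: "\<forall>i<n. 0 < x i" for x
    unfolding peval_def
  proof (intro sum_nonneg mult_nonneg_nonneg prod_nonneg)
    fix b i assume "b \<in> Poly_Mapping.keys h" "i \<in> Poly_Mapping.keys b"
    then have "i \<in> {0..<n}" using keys A by blast
    then show "0 \<le> x i ^ Poly_Mapping.lookup b i" using x by (simp add: less_imp_le)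
  qed (use keys nonneg in auto)
  then show ?thesis unfolding nonneg_cone_def poly_space_def using keys by auto
qed

lemma interior_of_pos_coeffs:
  assumes A: "finite A" "\<forall>b\<in>A. Poly_Mapping.keys b \<subseteq> {0..<n}"
    and keys: "Poly_Mapping.keys f \<subseteq> A" and pos: "\<forall>a\<in>A. 0 < Poly_Mapping.lookup f a"
  shows "f \<in> interior_in A (nonneg_cone n A)"
proof -
  define \<epsilon> where "\<epsilon> = Min (insert 1 (Poly_Mapping.lookup f ` A))"
  have "0 < \<epsilon>" unfolding \<epsilon>_def using A pos by simp
  have \<epsilon>_le: "\<epsilon> \<le> Poly_Mapping.lookup f b" if "b \<in> A" for b
    unfolding \<epsilon>_def using A that by simp
  have "h \<in> nonneg_cone n A"
    if "h \<in> poly_space A" "\<forall>b\<in>A. \<bar>Poly_Mapping.lookup h b - Poly_Mapping.lookup f b\<bar> < \<epsilon>" for h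
  proof (rule nonneg_cone_of_nonneg_coeffs[OF _ A(2)])
    show "Poly_Mapping.keys h \<subseteq> A" using that(1) by (simp add: poly_space_def)
    show "\<forall>b\<in>A. 0 \<le> Poly_Mapping.lookup h b"
      using that(2) \<epsilon>_le
      by (fastforce simp: abs_less_iff)
  qed
  moreover have "f \<in> nonneg_cone n A"
    using A(2) keys pos by (intro nonneg_cone_of_nonneg_coeffs) (auto intro: less_imp_le)
  ultimately show ?thesis unfolding interior_in_def using \<open>0 < \<epsilon>\<close> by blast
qed

lemma weight_indicator_diff:
  assumes "finite J" "finite F"
  shows "weight (\<lambda>i. of_bool (i \<in> J) - of_bool (i \<in> F)) b =
    real (\<Sum>i\<in>J. Poly_Mapping.lookup b i) - real (\<Sum>i\<in>F. Poly_Mapping.lookup b i)"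
proof -
  have indicator: "(\<Sum>i\<in>Poly_Mapping.keys b. of_bool (i \<in> X) * real (Poly_Mapping.lookup b i)) =
      real (\<Sum>i\<in>X. Poly_Mapping.lookup b i)" if "finite X" for X
  proof -
    have "(\<Sum>i\<in>Poly_Mapping.keys b. of_bool (i \<in> X) * real (Poly_Mapping.lookup b i)) =
        (\<Sum>i\<in>Poly_Mapping.keys b \<inter> X. real (Poly_Mapping.lookup b i))"
      by (simp add: sum.inter_restrict)
    also have "\<dots> = (\<Sum>i\<in>X. real (Poly_Mapping.lookup b i))"
      using that by (intro sum.mono_neutral_left) (auto simp: in_keys_iff)
    finally show ?thesis by simp
  qed
  show ?thesis
    unfolding weight_def left_diff_distrib sum_subtractf using indicator assms by simp
qed

lemma sum_add_one_le_card:
  fixes g :: "'a \<Rightarrow> nat"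
  assumes "finite J" "finite F" "\<forall>i\<in>J. g i \<le> 1"
    and "(\<exists>i\<in>F. g i \<noteq> 0) \<or> (\<exists>j\<in>J. g j = 0)"
  shows "(\<Sum>i\<in>J. g i) + 1 \<le> card J + (\<Sum>i\<in>F. g i)"
  using assms(4)
proof
  assume "\<exists>i\<in>F. g i \<noteq> 0"
  then obtain i where "i \<in> F" "g i \<noteq> 0" by blast
  then have "g i \<le> (\<Sum>i\<in>F. g i)" using assms(2) by (intro member_le_sum) auto
  with \<open>g i \<noteq> 0\<close> have "1 \<le> (\<Sum>i\<in>F. g i)" by linarith
  moreover have "(\<Sum>i\<in>J. g i) \<le> card J" using sum_mono[of J g "\<lambda>_. 1"] assms(3) by simp
  ultimately show ?thesis by simp
next
  assume "\<exists>j\<in>J. g j = 0"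
  then obtain j where "j \<in> J" "g j = 0" by blast
  then have "(\<Sum>i\<in>J. g i) = (\<Sum>i\<in>J - {j}. g i)" using assms(1) by (simp add: sum.remove)
  also have "\<dots> \<le> card (J - {j})" using sum_mono[of "J - {j}" g "\<lambda>_. 1"] assms(3) by simp
  moreover have "0 < card J" using \<open>j \<in> J\<close> assms(1) by (auto simp: card_gt_0_iff)
  ultimately show ?thesis using \<open>j \<in> J\<close> by (simp add: card_Diff_singleton)
qed

lemma expo_spanning_2forest_exposed:
  assumes G: "connected_graph V ends n" and E: "E \<subseteq> {0..<n}"
    and F: "F \<in> spanning_2forests V ends n"
    and no_mass: "mass_index V ends n E (expo n F) = {}"
    and b: "b \<in> generic_support V ends n L E" "b \<noteq> expo n F"
  defines "J \<equiv> {j. j \<notin> F \<and> insert j F \<in> spanning_trees V ends n}"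
  shows "weight (\<lambda>i. of_bool (i \<in> J) - of_bool (i \<in> F)) b + 1 \<le>
    weight (\<lambda>i. of_bool (i \<in> J) - of_bool (i \<in> F)) (expo n F)"
proof -
  have "F \<subseteq> {0..<n}" using F by (rule spanning_2forests_subset)
  moreover have "J \<subseteq> {0..<n}" unfolding J_def using spanning_trees_subset by blast
  ultimately have fin: "finite J" "finite F" by (auto intro: finite_subset)
  have mass_notin_J: "e \<notin> J" if "e \<in> E" for e
  proof
    assume "e \<in> J"
    then have "(e, insert e F) \<in> mass_index V ends n E (expo n F)"
      using that E single_add_expo_insert[of e n F] unfolding mass_index_def J_def by auto
    with no_mass show False by simp
  qed
  consider (forest) F' where "F' \<in> spanning_2forests V ends n" "b = expo n F'"
    | (mass) e T where "e \<in> E" "T \<in> spanning_trees V ends n"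
      "b = Poly_Mapping.single e 1 + expo n T"
    using generic_support_subset[OF finite_subset[OF E]] b(1) by fastforce
  then have "(\<forall>i\<in>J. Poly_Mapping.lookup b i \<le> 1) \<and>
    ((\<exists>i\<in>F. Poly_Mapping.lookup b i \<noteq> 0) \<or> (\<exists>j\<in>J. Poly_Mapping.lookup b j = 0))"
  proof cases
    case forest
    have "F \<subseteq> F'" if "\<forall>i\<in>F. Poly_Mapping.lookup b i = 0"
      using that \<open>F \<subseteq> {0..<n}\<close> by (auto simp: forest lookup_expo split: if_splits)
    then have "\<exists>i\<in>F. Poly_Mapping.lookup b i \<noteq> 0"
      using spanning_2forest_subset_eq[OF G F forest(1)] forest(2) b(2) by blast
    then show ?thesis by (simp add: forest lookup_expo)
  next
    case mass
    have lookup_b: "Poly_Mapping.lookup b i = (if e = i then 1 else 0) + (if i < n \<and> i \<notin> T then 1 else 0)" for i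
      by (simp add: mass lookup_add lookup_expo lookup_single when_def)
    have "\<exists>j\<in>J. Poly_Mapping.lookup b j = 0" if "\<forall>i\<in>F. Poly_Mapping.lookup b i = 0"
    proof -
      have "F \<subseteq> T" using that \<open>F \<subseteq> {0..<n}\<close> by (fastforce simp: lookup_b subset_iff split: if_splits)
      then obtain j where "j \<notin> F" "T = insert j F"
        using spanning_tree_eq_insert[OF G F mass(2)] by blast
      then have "j \<in> J" using mass(2) unfolding J_def by simp
      moreover have "e \<noteq> j" using mass_notin_J[OF mass(1)] \<open>j \<in> J\<close> by blast
      ultimately show ?thesis using lookup_b[of j] \<open>T = insert j F\<close> by auto
    qed
    moreover have "\<forall>i\<in>J. Poly_Mapping.lookup b i \<le> 1"
      using mass_notin_J[OF mass(1)] by (auto simp: lookup_b)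
    ultimately show ?thesis by blast
  qed
  then have "(\<Sum>i\<in>J. Poly_Mapping.lookup b i) + 1 \<le> card J + (\<Sum>i\<in>F. Poly_Mapping.lookup b i)"
    using fin by (intro sum_add_one_le_card) auto
  then have "real ((\<Sum>i\<in>J. Poly_Mapping.lookup b i) + 1) \<le>
      real (card J + (\<Sum>i\<in>F. Poly_Mapping.lookup b i))"
    by (rule of_nat_mono)
  moreover have "(\<Sum>i\<in>J. Poly_Mapping.lookup (expo n F) i) = (\<Sum>i\<in>J. 1)"
    using \<open>J \<subseteq> {0..<n}\<close> by (intro sum.cong) (auto simp: lookup_expo J_def subset_iff)
  moreover have "(\<Sum>i\<in>F. Poly_Mapping.lookup (expo n F) i) = 0"
    by (simp add: lookup_expo)
  ultimately show ?thesis unfolding weight_indicator_diff[OF fin] by simp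
qed

lemma shifted_masses_positive:
  assumes G: "connected_graph V ends n" and E: "E \<subseteq> {0..<n}"
    and interior: "symanzik_F V ends n L E z m \<in> interior_in (generic_support V ends n L E)
      (nonneg_cone n (generic_support V ends n L E))"
  shows "\<exists>c. \<forall>b\<in>generic_support V ends n L E.
    0 < Poly_Mapping.lookup (symanzik_F V ends n L E z (\<lambda>e. m e + c)) b"
proof -
  let ?A = "generic_support V ends n L E" and ?f = "symanzik_F V ends n L E z m"
  have "finite E" using E by (rule finite_subset) simp
  define c where "c = 1 + (\<Sum>b\<in>?A. \<bar>Poly_Mapping.lookup ?f b\<bar>)"
  have "0 < Poly_Mapping.lookup (symanzik_F V ends n L E z (\<lambda>e. m e + c)) b" if b: "b \<in> ?A" for b
  proof (cases "mass_index V ends n E b = {}")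
    case True
    then obtain F where F: "F \<in> spanning_2forests V ends n" "b = expo n F"
      using generic_support_subset[OF \<open>finite E\<close>] b unfolding mass_index_def by fastforce
    then have "0 < Poly_Mapping.lookup ?f b"
      using lookup_pos_of_interior_exposed[OF interior finite_generic_support[OF \<open>finite E\<close>] b]
        expo_spanning_2forest_exposed[OF G E F(1)] True by blast
    then show ?thesis using True by (simp add: lookup_symanzik_F_shift[OF \<open>finite E\<close>])
  next
    case False
    then have "1 \<le> card (mass_index V ends n E b)"
      using finite_mass_index[OF \<open>finite E\<close>] by (simp add: Suc_le_eq card_gt_0_iff)
    moreover have "\<bar>Poly_Mapping.lookup ?f b\<bar> \<le> (\<Sum>b\<in>?A. \<bar>Poly_Mapping.lookup ?f b\<bar>)"
      using b finite_generic_support[OF \<open>finite E\<close>] by (intro member_le_sum) auto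
    then have "\<bar>Poly_Mapping.lookup ?f b\<bar> < c" unfolding c_def by simp
    ultimately have "c \<le> c * real (card (mass_index V ends n E b))"
      by (simp add: mult_le_cancel_left1)
    with \<open>\<bar>Poly_Mapping.lookup ?f b\<bar> < c\<close> show ?thesis
      by (simp add: lookup_symanzik_F_shift[OF \<open>finite E\<close>])
  qed
  then show ?thesis by blast
qed

theorem mainTheorem18:
  fixes V :: "'v set" and ends :: "nat \<Rightarrow> 'v \<times> 'v" and n :: nat
    and L :: "nat set \<Rightarrow> real^'k \<Rightarrow> real" and E :: "nat set"
  assumes "connected_graph V ends n"
    and "\<forall>F\<in>spanning_2forests V ends n. linear (L F)"
    and "E \<subseteq> {0..<n}"
  shows "(kinematic_space V ends n L E \<inter>
            interior_in (generic_support V ends n L E)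
              (nonneg_cone n (generic_support V ends n L E)) \<noteq> {})
     \<longleftrightarrow> (\<exists>f\<in>kinematic_space V ends n L E.
            \<forall>a\<in>generic_support V ends n L E. Poly_Mapping.lookup f a > 0)"
proof
  assume "kinematic_space V ends n L E \<inter> interior_in (generic_support V ends n L E)
    (nonneg_cone n (generic_support V ends n L E)) \<noteq> {}"
  then obtain z m where "symanzik_F V ends n L E z m \<in> interior_in (generic_support V ends n L E)
    (nonneg_cone n (generic_support V ends n L E))"
    unfolding kinematic_space_def by blast
  with shifted_masses_positive[OF assms(1,3)] show "\<exists>f\<in>kinematic_space V ends n L E.
    \<forall>a\<in>generic_support V ends n L E. Poly_Mapping.lookup f a > 0"
    unfolding kinematic_space_def by blast
next
  assume "\<exists>f\<in>kinematic_space V ends n L E.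
    \<forall>a\<in>generic_support V ends n L E. Poly_Mapping.lookup f a > 0"
  then obtain f where f: "f \<in> kinematic_space V ends n L E"
    "\<forall>a\<in>generic_support V ends n L E. 0 < Poly_Mapping.lookup f a" by blast
  have "finite E" using assms(3) by (rule finite_subset) simp
  have "f \<in> interior_in (generic_support V ends n L E) (nonneg_cone n (generic_support V ends n L E))"
  proof (rule interior_of_pos_coeffs[OF finite_generic_support[OF \<open>finite E\<close>] _ _ f(2)])
    show "\<forall>b\<in>generic_support V ends n L E. Poly_Mapping.keys b \<subseteq> {0..<n}"
      using keys_generic_support[OF assms(3)] by blast
    show "Poly_Mapping.keys f \<subseteq> generic_support V ends n L E"
      using f(1) unfolding generic_support_def by blast
  qed
  with f(1) show "kinematic_space V ends n L E \<inter> interior_in (generic_support V ends n L E)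
    (nonneg_cone n (generic_support V ends n L E)) \<noteq> {}" by blast
qed

end
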